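(* Let $H\ge 1$ be an integer, $V$ a finite node set with root $r\in V$, and let $(x,l,g)\in\mathcal{P}$, where $\mathcal{P}$ is the polytope defined in the context. Let $v_1,v_2,\ldots,v_{H+1}$ be a directed walk with $H$ arcs (so $v_i\neq v_{i+1}$ for $1\le i\le H$; nodes may repeat otherwise) such that $v_1\neq r$. Then $$\sum_{i=1}^{H} x_{v_i,v_{i+1}}\le H-1.$$
   Context: Setting: $V$ is a finite set of nodes of a complete undirected graph, $r\in V$ is a root, and $H$ is the hop limit. For every ordered pair $(u,v)$ of distinct nodes of $V$ there is a real variable $x_{u,v}$ (arc variable), and for every $v\in V$ and $i\in\{0,\dots,H\}$ there are real variables $l_{v,i}$ ("position of $v$ is less than $i$") and $g_{i,v}$ ("position of $v$ is greater than $i$"). The partial-ordering polytope $\mathcal{P}$ is the set of all $(x,l,g)$ satisfying: (P1) $l_{r,0}=g_{0,r}=0$; (P2) $l_{v,1}=g_{H,v}=0$ for all $v\in V\setminus\{r\}$; (P3) $l_{v,i}-l_{v,i+1}\le 0$ for all $v\in V$, $i=0,\dots,H-1$; (P4) $g_{i,v}+l_{v,i+1}=1$ for all $v\in V$, $i=0,\dots,H-1$; (P5) $l_{u,i}+g_{i,v}\ge x_{u,v}$ for all $u\in V$, $v\in V\setminus\{u\}$, $i=0,\dots,H$; (P6) $\sum_{u\in V\setminus\{v\}}x_{u,v}\le 1$ for all $v\in V$; (P7) $\sum_{u\in V\setminus\{v,w\}}x_{u,v}\ge x_{v,w}$ for all $v\in V\setminus\{r\}$, $w\in V\setminus\{v\}$;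 (P8) $0\le x_{u,v}\le 1$ for all arcs; (P9) $0\le l_{v,i},g_{i,v}\le 1$ for all $v,i$. *)

theory Defs
  imports Complex_Main
begin

text \<open>Membership of (x,l,g) in the partial-ordering polytope P for node set V,
 root r and hop limit H. x u v is the arc variable x_{u,v}, l v i is l_{v,i},
 g i v is g_{i,v}. Only values on V (and indices 0..H) are constrained.\<close>

definition in_PO_polytope ::
  "'a set \<Rightarrow> 'a \<Rightarrow> nat \<Rightarrow> ('a \<Rightarrow> 'a \<Rightarrow> real) \<Rightarrow> ('a \<Rightarrow> nat \<Rightarrow> real) \<Rightarrow> (nat \<Rightarrow> 'a \<Rightarrow> real) \<Rightarrow> bool"
where
  "in_PO_polytope V r H x l g \<longleftrightarrow>
     \<comment> \<open>(P1)\<close>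
     l r 0 = 0 \<and> g 0 r = 0 \<and>
     \<comment> \<open>(P2)\<close>
     (\<forall>v\<in>V - {r}. l v 1 = 0 \<and> g H v = 0) \<and>
     \<comment> \<open>(P3)\<close>
     (\<forall>v\<in>V. \<forall>i<H. l v i - l v (Suc i) \<le> 0) \<and>
     \<comment> \<open>(P4)\<close>
     (\<forall>v\<in>V. \<forall>i<H. g i v + l v (Suc i) = 1) \<and>
     \<comment> \<open>(P5)\<close>
     (\<forall>u\<in>V. \<forall>v\<in>V - {u}. \<forall>i\<le>H. l u i + g i v \<ge> x u v) \<and>
     \<comment> \<open>(P6)\<close>
     (\<forall>v\<in>V. (\<Sum>u\<in>V - {v}. x u v) \<le> 1) \<and>
     \<comment> \<open>(P7)\<close>
     (\<forall>v\<in>V - {r}. \<forall>w\<in>V - {v}. (\<Sum>u\<in>V - {v, w}. x u v) \<ge> x v w) \<and>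
     \<comment> \<open>(P8)\<close>
     (\<forall>u\<in>V. \<forall>v\<in>V - {u}. 0 \<le> x u v \<and> x u v \<le> 1) \<and>
     \<comment> \<open>(P9)\<close>
     (\<forall>v\<in>V. \<forall>i\<le>H. 0 \<le> l v i \<and> l v i \<le> 1 \<and> 0 \<le> g i v \<and> g i v \<le> 1)"

end

theory Submission
  imports Defs
begin

text \<open>By (P5) and (P4), an arc leaving level i is bounded by 1 + l(u, i) - l(v, i+1),
  so the first H - 1 arcs of the walk telescope to at most H - 1 - l(v_H, H), using
  l(v_1, 1) = 0. The last arc is bounded by l(v_H, H) + g(H, v_{H+1}) = l(v_H, H),
  unless it enters the root; but any arc into the root has value at most
  l(u, 0) + g(0, r) \<le> l(u, 1) = 0, and then the bound x \<le> 1 on the other arcs suffices.\<close>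

lemma sum_le_telescoping:
  fixes a b :: "nat \<Rightarrow> real"
  assumes "\<And>i. m \<le> i \<Longrightarrow> i \<le> n \<Longrightarrow> a i \<le> 1 + b i - b (Suc i)" and "m \<le> Suc n"
  shows "(\<Sum>i=m..n. a i) \<le> real (Suc n - m) + b m - b (Suc n)"
proof -
  have "(\<Sum>i=m..n. a i) \<le> (\<Sum>i=m..n. 1 - (b (Suc i) - b i))"
    by (rule sum_mono) (use assms(1) in fastforce)
  also have "\<dots> = real (Suc n - m) - (\<Sum>i=m..n. b (Suc i) - b i)"
    by (simp add: sum_subtractf)
  also have "\<dots> = real (Suc n - m) - (b (Suc n) - b m)"
    by (simp only: sum_Suc_diff[OF assms(2)])
  finally show ?thesis by simp
qed

lemma in_PO_polytope_l_one:
  assumes "in_PO_polytope V r H x l g" and "v \<in> V" and "v \<noteq> r"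
  shows "l v 1 = 0"
  using assms unfolding in_PO_polytope_def by blast

lemma in_PO_polytope_arc_le_one:
  assumes "in_PO_polytope V r H x l g" and "u \<in> V" and "v \<in> V" and "u \<noteq> v"
  shows "x u v \<le> 1"
  using assms unfolding in_PO_polytope_def by blast

lemma in_PO_polytope_arc_le_level_step:
  assumes P: "in_PO_polytope V r H x l g" and "u \<in> V" and "v \<in> V" and "u \<noteq> v" and "i < H"
  shows "x u v \<le> 1 + l u i - l v (Suc i)"
proof -
  have "x u v \<le> l u i + g i v" using P assms(2-5) unfolding in_PO_polytope_def by auto
  moreover have "g i v + l v (Suc i) = 1" using P assms(3,5) unfolding in_PO_polytope_def by blast
  ultimately show ?thesis by linarith
qed

lemma in_PO_polytope_arc_le_last_level:
  assumes P: "in_PO_polytope V r H x l g" and "u \<in> V" and "v \<in> V" and "u \<noteq> v" and "v \<noteq> r"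
  shows "x u v \<le> l u H"
proof -
  have "x u v \<le> l u H + g H v" using P assms(2-4) unfolding in_PO_polytope_def by auto
  moreover have "g H v = 0" using P assms(3,5) unfolding in_PO_polytope_def by blast
  ultimately show ?thesis by simp
qed

lemma in_PO_polytope_arc_into_root_le_zero:
  assumes P: "in_PO_polytope V r H x l g" and "H \<ge> 1" and "r \<in> V" and "u \<in> V" and "u \<noteq> r"
  shows "x u r \<le> 0"
proof -
  have "x u r \<le> l u 0 + g 0 r" using P assms(3-5) unfolding in_PO_polytope_def by blast
  moreover have "g 0 r = 0" using P unfolding in_PO_polytope_def by blast
  moreover have "l u 0 \<le> l u 1" using P assms(2,4) unfolding in_PO_polytope_def by force
  ultimately show ?thesis using in_PO_polytope_l_one[OF P assms(4,5)] by simp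
qed

theorem theorem1:
  fixes V :: "'a set" and r :: 'a and H :: nat
    and x :: "'a \<Rightarrow> 'a \<Rightarrow> real" and l :: "'a \<Rightarrow> nat \<Rightarrow> real" and g :: "nat \<Rightarrow> 'a \<Rightarrow> real"
    and w :: "nat \<Rightarrow> 'a"
  assumes "H \<ge> 1"
    and "finite V" and "r \<in> V"
    and "in_PO_polytope V r H x l g"
    and "\<forall>i\<in>{1..H+1}. w i \<in> V"
    and "\<forall>i\<in>{1..H}. w i \<noteq> w (Suc i)"
    and "w 1 \<noteq> r"
  shows "(\<Sum>i=1..H. x (w i) (w (Suc i))) \<le> real H - 1"
proof -
  note P = assms(4)
  have arc: "w i \<in> V" "w (Suc i) \<in> V" "w i \<noteq> w (Suc i)" if "1 \<le> i" "i \<le> H" for i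
    using assms(5,6) that by auto
  have split: "(\<Sum>i=1..H. x (w i) (w (Suc i)))
      = (\<Sum>i=1..H-1. x (w i) (w (Suc i))) + x (w H) (w (Suc H))"
    using assms(1) by (cases H) (auto simp: sum.cl_ivl_Suc)
  show ?thesis
  proof (cases "w (Suc H) = r")
    case True
    have "(\<Sum>i=1..H-1. x (w i) (w (Suc i))) \<le> (\<Sum>i=1..H-1. 1)"
      by (rule sum_mono) (use in_PO_polytope_arc_le_one[OF P] arc in auto)
    moreover have "x (w H) (w (Suc H)) \<le> 0"
      using in_PO_polytope_arc_into_root_le_zero[OF P assms(1,3)] arc[of H] assms(1) True by auto
    ultimately show ?thesis using split assms(1) by simp
  next
    case False
    have "(\<Sum>i=1..H-1. x (w i) (w (Suc i))) \<le> real (H - 1) + l (w 1) 1 - l (w H) H"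
      using sum_le_telescoping[where b = "\<lambda>i. l (w i) i" and m = 1 and n = "H - 1"]
        in_PO_polytope_arc_le_level_step[OF P] arc assms(1) by force
    moreover have "l (w 1) 1 = 0" using in_PO_polytope_l_one[OF P] arc[of 1] assms(1,7) by auto
    moreover have "x (w H) (w (Suc H)) \<le> l (w H) H"
      using in_PO_polytope_arc_le_last_level[OF P] arc[of H] assms(1) False by auto
    ultimately show ?thesis using split assms(1) by (simp add: of_nat_diff)
  qed
qed

end
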